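(* Let $X$ be a complete hyperbolic surface of finite area and $p$ a cusp. There is a constant $C>0$ such that for every integer $n\ge1$ and every $T>0$, $$A_n^p(T)\le \frac{Ce^T}{n^2}.$$
   Context: $N_p(1)$ is the embedded horoball neighborhood of $p$ whose boundary horocycle has length $1$. Lifting to the upper half-plane with $p$ at $\infty$, $N_p(1)$ lifts to $\{\mathrm{Im}\,z\ge h\}$ and the stabilizer of $\infty$ is generated by $z\mapsto z+1$ (suitably normalized). An $n$-excursion in $N_p(1)$ is a geodesic arc contained in $N_p(1)$ with endpoints on $\partial N_p(1)$ whose lifted endpoints $z_1,z_2$ satisfy $n\le|\mathrm{Re}\,z_1-\mathrm{Re}\,z_2|<n+1$. $A_n^p(T)$ is the total number of $n$-excursions in $N_p(1)$ occurring as subarcs of closed geodesics of length $\le T$ (i.e. the number of pairs $(\gamma,\eta)$ with $\gamma$ a closed geodesic of length $\le T$ and $\eta$ an $n$-excursion of $\gamma$ in $N_p(1)$). *)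

theory Defs
  imports "HOL-Analysis.Analysis"
begin

text \<open>Model: a complete orientable hyperbolic surface of finite area is the quotient
  of the upper half plane by a Fuchsian group, represented as a set of matrices of
  SL(2,R) (acting by Moebius transformations, possibly containing -I).\<close>

type_synonym mat2 = "real^2^2"


definition mk2 :: "real \<Rightarrow> real \<Rightarrow> real \<Rightarrow> real \<Rightarrow> mat2" where
  "mk2 a b c d = (\<chi> i j. if i = 1 then (if j = 1 then a else b) else (if j = 1 then c else d))"

definition tr2 :: "mat2 \<Rightarrow> real" where
  "tr2 g = g$1$1 + g$2$2"

fun mpow :: "mat2 \<Rightarrow> nat \<Rightarrow> mat2" where
  "mpow g 0 = mat 1"
| "mpow g (Suc k) = g ** mpow g k"

definition mob :: "mat2 \<Rightarrow> complex \<Rightarrow> complex" where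
  "mob g z = (of_real (g$1$1) * z + of_real (g$1$2)) / (of_real (g$2$1) * z + of_real (g$2$2))"

definition UHP :: "complex set" where
  "UHP = {z. Im z > 0}"

text \<open>Fuchsian group giving a complete hyperbolic surface of finite area:
  subgroup of SL(2,R), discrete, torsion free (in PSL(2,R)), with a measurable
  set of finite hyperbolic area whose translates cover the upper half plane.\<close>
definition fuchsian_finite_area_surface_group :: "mat2 set \<Rightarrow> bool" where
  "fuchsian_finite_area_surface_group \<Gamma> \<longleftrightarrow>
     (\<forall>g\<in>\<Gamma>. det g = 1) \<and> mat 1 \<in> \<Gamma> \<and>
     (\<forall>g\<in>\<Gamma>. \<forall>h\<in>\<Gamma>. g ** h \<in> \<Gamma>) \<and>
     (\<forall>g\<in>\<Gamma>. \<exists>h\<in>\<Gamma>. g ** h = mat 1) \<and>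
     (\<forall>R. finite (\<Gamma> \<inter> cball 0 R)) \<and>
     (\<forall>g\<in>\<Gamma>. (\<exists>k>0. mpow g k = mat 1 \<or> mpow g k = - mat 1) \<longrightarrow> g = mat 1 \<or> g = - mat 1) \<and>
     (\<exists>F. F \<in> sets lebesgue \<and> F \<subseteq> UHP \<and>
          (\<lambda>z. 1 / (Im z)^2) integrable_on F \<and>
          (\<forall>z\<in>UHP. \<exists>g\<in>\<Gamma>. mob g z \<in> F))"

text \<open>Cusp p normalised at infinity: the stabiliser of infinity (lower-left entry 0)
  is generated, modulo +-I, by the translation z \<mapsto> z + 1.\<close>
definition transl :: "int \<Rightarrow> mat2" where
  "transl k = mk2 1 (of_int k) 0 1"

definition cusp_at_infinity :: "mat2 set \<Rightarrow> bool" where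
  "cusp_at_infinity \<Gamma> \<longleftrightarrow> transl 1 \<in> \<Gamma> \<and>
     (\<forall>g\<in>\<Gamma>. g$2$1 = 0 \<longrightarrow> (\<exists>k::int. g = transl k \<or> g = - transl k))"

definition hyperbolic_el :: "mat2 \<Rightarrow> bool" where
  "hyperbolic_el g \<longleftrightarrow> \<bar>tr2 g\<bar> > 2"

definition primitive_in :: "mat2 set \<Rightarrow> mat2 \<Rightarrow> bool" where
  "primitive_in \<Gamma> g \<longleftrightarrow> \<not> (\<exists>h\<in>\<Gamma>. \<exists>k\<ge>2. g = mpow h k \<or> g = - mpow h k)"

text \<open>Translation length of a hyperbolic element = length of the closed geodesic.\<close>
definition transl_length :: "mat2 \<Rightarrow> real" where
  "transl_length g = 2 * arcosh (\<bar>tr2 g\<bar> / 2)"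

text \<open>The axis of a hyperbolic element with nonzero lower-left entry: the geodesic
  of the upper half plane whose endpoints are the two real fixed points of g,
  i.e. the semicircle with the following centre and radius.\<close>
definition axis_centre :: "mat2 \<Rightarrow> real" where
  "axis_centre g = (g$1$1 - g$2$2) / (2 * g$2$1)"

definition axis_radius :: "mat2 \<Rightarrow> real" where
  "axis_radius g = sqrt ((tr2 g)^2 - 4) / (2 * \<bar>g$2$1\<bar>)"

definition axis :: "mat2 \<Rightarrow> complex set" where
  "axis g = {z\<in>UHP. cmod (z - of_real (axis_centre g)) = axis_radius g}"

text \<open>Endpoints of the lifted arc in the horoball {Im z \<ge> 1} (the lift of N_p(1),
  whose boundary horocycle has length 1 for the translation z \<mapsto> z+1), and the
  horizontal width |Re z1 - Re z2| of the excursion.\<close>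
definition excursion_endpoints :: "mat2 \<Rightarrow> complex set" where
  "excursion_endpoints g = {z\<in>axis g. Im z = 1}"

definition n_excursion_lift :: "nat \<Rightarrow> mat2 \<Rightarrow> bool" where
  "n_excursion_lift n g \<longleftrightarrow> g$2$1 \<noteq> 0 \<and>
     (\<exists>z1 z2. excursion_endpoints g = {z1, z2} \<and> z1 \<noteq> z2 \<and>
        real n \<le> \<bar>Re z1 - Re z2\<bar> \<and> \<bar>Re z1 - Re z2\<bar> < real n + 1)"

text \<open>The oriented
  primitive closed geodesics are the conjugacy classes of primitive hyperbolic
  elements (sign fixed by tr > 2); the lifts of a closed geodesic are the axes of
  the elements of its conjugacy class; the excursions of it in N_p(1) correspond to
  lifts meeting {Im z \<ge> 1} modulo the stabiliser <z \<mapsto> z+1>, normalised by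
  requiring the midpoint of the lifted arc to have real part in [0,1).\<close>
definition excursion_lifts :: "mat2 set \<Rightarrow> nat \<Rightarrow> real \<Rightarrow> mat2 set" where
  "excursion_lifts \<Gamma> n T = {g\<in>\<Gamma>. primitive_in \<Gamma> g \<and> tr2 g > 2 \<and>
      transl_length g \<le> T \<and> n_excursion_lift n g \<and>
      0 \<le> axis_centre g \<and> axis_centre g < 1}"

definition A_count :: "mat2 set \<Rightarrow> nat \<Rightarrow> real \<Rightarrow> nat" where
  "A_count \<Gamma> n T = card (excursion_lifts \<Gamma> n T)"

end

theory Submission
  imports Defs
begin

text \<open>A lift of an \<open>n\<close>-excursion is a hyperbolic \<open>g = (a b; c d)\<close> whose axis cuts the horocycle
  \<open>Im z = 1\<close> in a chord of width \<open>W \<in> [n, n+1)\<close>.  The geometry of the axis gives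
  \<open>tr\<^sup>2 = c\<^sup>2 (W\<^sup>2 + 4) + 4\<close>, so \<open>n \<bar>c\<bar> \<le> tr g \<le> 2 e\<^sup>T\<^sup>/\<^sup>2\<close>.  By Shimizu's lemma every element of
  \<open>\<Gamma>\<close> with \<open>c \<noteq> 0\<close> has \<open>\<bar>c\<bar> \<ge> 1\<close>; applied to \<open>g'\<^sup>-\<^sup>1 (z \<mapsto> z - j) g\<close> it shows that the cusp
  images \<open>a/c mod 1\<close> of two lifts are either equal or at distance \<open>\<ge> 1/\<bar>c c'\<bar> \<ge> n\<^sup>2/(4e\<^sup>T)\<close>, so they
  take at most \<open>8e\<^sup>T/n\<^sup>2\<close> values.  Lifts with the same cusp image (and the same sign of \<open>c\<close>) differ
  by translations on both sides, and the normalisations of trace and axis centre leave at most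
  \<open>25\<close> of them.\<close>

section \<open>Two-by-two matrices\<close>

lemma mk2_nth [simp]:
  "mk2 a b c d $1$1 = a" "mk2 a b c d $1$2 = b" "mk2 a b c d $2$1 = c" "mk2 a b c d $2$2 = d"
  by (simp_all add: mk2_def)

lemma mat2_eq_iff:
  "(g::mat2) = h \<longleftrightarrow> g$1$1 = h$1$1 \<and> g$1$2 = h$1$2 \<and> g$2$1 = h$2$1 \<and> g$2$2 = h$2$2"
  by (auto simp: vec_eq_iff forall_2)

lemma mat2_mult_nth [simp]:
  fixes g h :: mat2
  shows "(g ** h)$1$1 = g$1$1 * h$1$1 + g$1$2 * h$2$1"
    "(g ** h)$1$2 = g$1$1 * h$1$2 + g$1$2 * h$2$2"
    "(g ** h)$2$1 = g$2$1 * h$1$1 + g$2$2 * h$2$1"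
    "(g ** h)$2$2 = g$2$1 * h$1$2 + g$2$2 * h$2$2"
  by (simp_all add: matrix_matrix_mult_def sum_2)

lemma mat2_one_nth [simp]:
  "(mat 1::mat2)$1$1 = 1" "(mat 1::mat2)$1$2 = 0" "(mat 1::mat2)$2$1 = 0" "(mat 1::mat2)$2$2 = 1"
  by (simp_all add: mat_def)

lemma det_mat2: "det (g::mat2) = g$1$1 * g$2$2 - g$1$2 * g$2$1"
  by (simp add: det_2)

lemma transl_nth [simp]:
  "transl k $1$1 = 1" "transl k $1$2 = of_int k" "transl k $2$1 = 0" "transl k $2$2 = 1"
  by (simp_all add: transl_def)

lemma transl_mult: "transl j ** transl k = transl (j + k)"
  by (simp add: mat2_eq_iff)

definition adj :: "mat2 \<Rightarrow> mat2" where
  "adj g = mk2 (g$2$2) (- g$1$2) (- g$2$1) (g$1$1)"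

lemma adj_nth [simp]:
  "adj g $1$1 = g$2$2" "adj g $1$2 = - g$1$2" "adj g $2$1 = - g$2$1" "adj g $2$2 = g$1$1"
  by (simp_all add: adj_def)

lemma
  assumes "det g = 1"
  shows mult_adj_right: "g ** adj g = mat 1"
    and mult_adj_left: "adj g ** g = mat 1"
  using assms by (auto simp: mat2_eq_iff det_mat2 algebra_simps)

lemma norm_mat2_le: "norm (g::mat2) \<le> \<bar>g$1$1\<bar> + \<bar>g$1$2\<bar> + \<bar>g$2$1\<bar> + \<bar>g$2$2\<bar>"
proof -
  have "norm g \<le> norm (g$1) + norm (g$2)"
    unfolding norm_vec_def by (rule order_trans[OF L2_set_le_sum]) (auto simp: sum_2)
  also have "norm (g$1) \<le> \<bar>g$1$1\<bar> + \<bar>g$1$2\<bar>" using norm_le_l1_cart[of "g$1"] by (simp add: sum_2)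
  also have "norm (g$2) \<le> \<bar>g$2$1\<bar> + \<bar>g$2$2\<bar>" using norm_le_l1_cart[of "g$2"] by (simp add: sum_2)
  finally show ?thesis by simp
qed

lemma conj_transl_nth:
  assumes "det g = 1"
  shows "(g ** transl 1 ** adj g)$1$1 = 1 - g$1$1 * g$2$1"
    "(g ** transl 1 ** adj g)$1$2 = (g$1$1)\<^sup>2"
    "(g ** transl 1 ** adj g)$2$1 = - (g$2$1)\<^sup>2"
    "(g ** transl 1 ** adj g)$2$2 = 1 + g$1$1 * g$2$1"
  using assms by (auto simp: det_mat2 algebra_simps power2_eq_square)

lemma conj_transl_bounds:
  fixes g :: mat2 and q M :: real
  assumes "det g = 1" and c: "0 < \<bar>g$2$1\<bar>" "\<bar>g$2$1\<bar> \<le> q" "q < 1"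
    and a: "\<bar>g$1$1\<bar> \<le> M" and M: "1 + M * q \<le> M"
  defines "g' \<equiv> g ** transl 1 ** adj g"
  shows "0 < \<bar>g'$2$1\<bar>" "\<bar>g'$2$1\<bar> < \<bar>g$2$1\<bar>" "\<bar>g'$1$1\<bar> \<le> M" "\<bar>g'$1$2\<bar> \<le> M\<^sup>2" "\<bar>g'$2$2\<bar> \<le> M"
proof -
  note e = conj_transl_nth[OF \<open>det g = 1\<close>, folded g'_def]
  have "(g$2$1)\<^sup>2 = \<bar>g$2$1\<bar> * \<bar>g$2$1\<bar>" by (simp add: power2_eq_square abs_mult_self_eq)
  also have "\<dots> < \<bar>g$2$1\<bar> * 1" using c by (intro mult_strict_left_mono) auto
  finally show "\<bar>g'$2$1\<bar> < \<bar>g$2$1\<bar>" using e(3) by simp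
  show "0 < \<bar>g'$2$1\<bar>" using e(3) c by simp
  have "\<bar>g$1$1 * g$2$1\<bar> \<le> M * q" unfolding abs_mult using a c by (intro mult_mono) auto
  then show "\<bar>g'$1$1\<bar> \<le> M" "\<bar>g'$2$2\<bar> \<le> M" using e(1,4) M by (simp_all add: abs_le_iff)
  show "\<bar>g'$1$2\<bar> \<le> M\<^sup>2" using e(2) power_mono[OF a abs_ge_zero, of 2] by simp
qed

section \<open>Discrete subgroups of \<open>SL(2,\<real>)\<close>\<close>

locale discrete_SL2 =
  fixes \<Gamma> :: "mat2 set"
  assumes det_eq_1: "g \<in> \<Gamma> \<Longrightarrow> det g = 1"
    and one_in: "mat 1 \<in> \<Gamma>"
    and mult_in: "g \<in> \<Gamma> \<Longrightarrow> h \<in> \<Gamma> \<Longrightarrow> g ** h \<in> \<Gamma>"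
    and adj_in: "g \<in> \<Gamma> \<Longrightarrow> adj g \<in> \<Gamma>"
    and finite_inter_cball: "finite (\<Gamma> \<inter> cball 0 R)"
begin

lemma transl_in:
  assumes "transl 1 \<in> \<Gamma>"
  shows "transl k \<in> \<Gamma>"
proof (induct k rule: int_induct[where k = 0])
  case base
  have "transl 0 = mat 1" by (simp add: mat2_eq_iff)
  then show ?case using one_in by simp
next
  case (step1 i)
  then show ?case using mult_in[OF assms step1(2)] transl_mult[of 1 i] by (simp add: add.commute)
next
  case (step2 i)
  have "adj (transl 1) = transl (-1)" by (simp add: mat2_eq_iff)
  then show ?case using mult_in[OF adj_in[OF assms] step2(2)] transl_mult[of "-1" i] by simp
qed

text \<open>Conjugating \<open>z \<mapsto> z + 1\<close> by \<open>h\<close> maps the lower-left entry \<open>c\<close> to \<open>-c\<^sup>2\<close>; if \<open>0 < \<bar>c\<bar> < 1\<close>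
  the iterates are pairwise distinct but bounded, contradicting discreteness.\<close>

theorem shimizu:
  assumes "transl 1 \<in> \<Gamma>" and h: "h \<in> \<Gamma>" "h$2$1 \<noteq> 0"
  shows "1 \<le> \<bar>h$2$1\<bar>"
proof (rule ccontr)
  assume "\<not> 1 \<le> \<bar>h$2$1\<bar>"
  define q where "q = \<bar>h$2$1\<bar>"
  have q: "0 < q" "q < 1" using h \<open>\<not> 1 \<le> \<bar>h$2$1\<bar>\<close> unfolding q_def by auto
  define M where "M = max \<bar>h$1$1\<bar> (1 / (1 - q))"
  have "1 / (1 - q) \<le> M" by (simp add: M_def)
  then have "1 \<le> M * (1 - q)" using q by (simp add: field_simps)
  then have M: "1 + M * q \<le> M" by (simp add: algebra_simps)
  define H where "H = rec_nat h (\<lambda>_ g. g ** transl 1 ** adj g)"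
  have H_0: "H 0 = h" and H_Suc: "H (Suc k) = H k ** transl 1 ** adj (H k)" for k
    by (simp_all add: H_def)
  have H_in: "H k \<in> \<Gamma>" for k
    by (induct k) (simp_all add: H_0 H_Suc h mult_in adj_in transl_in[OF assms(1)])
  have step: "0 < \<bar>H (Suc k)$2$1\<bar> \<and> \<bar>H (Suc k)$2$1\<bar> < \<bar>H k$2$1\<bar> \<and> \<bar>H (Suc k)$1$1\<bar> \<le> M
      \<and> \<bar>H (Suc k)$1$2\<bar> \<le> M\<^sup>2 \<and> \<bar>H (Suc k)$2$2\<bar> \<le> M"
    if "0 < \<bar>H k$2$1\<bar>" "\<bar>H k$2$1\<bar> \<le> q" "\<bar>H k$1$1\<bar> \<le> M" for k
    using conj_transl_bounds[OF det_eq_1[OF H_in] that(1,2) q(2) that(3) M] by (simp add: H_Suc)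
  have inv: "0 < \<bar>H k$2$1\<bar> \<and> \<bar>H k$2$1\<bar> \<le> q \<and> \<bar>H k$1$1\<bar> \<le> M" for k
  proof (induct k)
    case 0
    then show ?case using h by (simp add: H_0 q_def M_def)
  next
    case (Suc k)
    then show ?case using step[of k] by auto
  qed
  have "strict_mono (\<lambda>k. - \<bar>H k$2$1\<bar>)"
    by (rule strict_monoI_Suc) (use step inv in simp)
  then have "inj H" by (intro injI) (metis strict_mono_eq)
  then have "infinite (range H)" by (rule range_inj_infinite)
  moreover
  define R where "R = max (norm h) (M + M\<^sup>2 + q + M)"
  have "norm (H k) \<le> R" for k
  proof (cases k)
    case (Suc l)
    then have "norm (H k) \<le> M + M\<^sup>2 + q + M"
      using norm_mat2_le[of "H (Suc l)"] step[of l] inv[of l] inv[of "Suc l"] by simp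
    then show ?thesis unfolding R_def by linarith
  qed (simp add: H_0 R_def)
  then have "range H \<subseteq> \<Gamma> \<inter> cball 0 R" using H_in by (auto simp: dist_norm)
  ultimately show False using finite_inter_cball finite_subset by blast
qed

text \<open>\<open>a/c = g(\<infinity>)\<close>, reduced modulo the translation \<open>z \<mapsto> z + 1\<close>.\<close>

definition cusp_phase :: "mat2 \<Rightarrow> real" where
  "cusp_phase g = frac (g$1$1 / g$2$1)"

lemma adj_transl_mult_lower_left:
  fixes g g' :: mat2
  assumes "g$2$1 \<noteq> 0" "g'$2$1 \<noteq> 0"
  shows "(adj g' ** transl (-j) ** g)$2$1
    = - (g$2$1 * g'$2$1) * (g$1$1 / g$2$1 - g'$1$1 / g'$2$1 - of_int j)"
  using assms by (simp add: field_simps)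

lemma cusp_phase_difference:
  assumes "transl 1 \<in> \<Gamma>" and g: "g \<in> \<Gamma>" "g$2$1 \<noteq> 0" and g': "g' \<in> \<Gamma>" "g'$2$1 \<noteq> 0"
  obtains j h where "h \<in> \<Gamma>" "g = transl j ** g' ** h"
    "h$2$1 = - (g$2$1 * g'$2$1) * (cusp_phase g - cusp_phase g')"
proof
  define j where "j = \<lfloor>g$1$1 / g$2$1\<rfloor> - \<lfloor>g'$1$1 / g'$2$1\<rfloor>"
  define h where "h = adj g' ** transl (-j) ** g"
  show "h \<in> \<Gamma>" unfolding h_def using g g' by (intro mult_in adj_in transl_in[OF assms(1)])
  have "transl j ** g' ** h = transl j ** ((g' ** adj g') ** transl (-j) ** g)"
    unfolding h_def by (simp add: matrix_mul_assoc)
  also have "\<dots> = (transl j ** transl (-j)) ** g"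
    using mult_adj_right[OF det_eq_1[OF g'(1)]] by (simp add: matrix_mul_assoc)
  also have "\<dots> = g" by (simp add: transl_mult mat2_eq_iff)
  finally show "g = transl j ** g' ** h" by simp
  show "h$2$1 = - (g$2$1 * g'$2$1) * (cusp_phase g - cusp_phase g')"
    unfolding h_def adj_transl_mult_lower_left[OF g(2) g'(2)]
    by (simp add: cusp_phase_def frac_def j_def)
qed

lemma cusp_phase_separated:
  assumes "transl 1 \<in> \<Gamma>" and "g \<in> \<Gamma>" "g$2$1 \<noteq> 0" and "g' \<in> \<Gamma>" "g'$2$1 \<noteq> 0"
    and "cusp_phase g \<noteq> cusp_phase g'"
  shows "1 \<le> \<bar>g$2$1 * g'$2$1\<bar> * \<bar>cusp_phase g - cusp_phase g'\<bar>"
proof -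
  obtain j h where h: "h \<in> \<Gamma>" "h$2$1 = - (g$2$1 * g'$2$1) * (cusp_phase g - cusp_phase g')"
    using cusp_phase_difference[OF assms(1-5)] .
  then have "h$2$1 \<noteq> 0" using assms(3,5,6) by simp
  then show ?thesis using shimizu[OF assms(1) h(1)] h(2) by (simp add: abs_mult)
qed

end

locale cusp_group = discrete_SL2 +
  assumes transl_1_in: "transl 1 \<in> \<Gamma>"
    and stabiliser_infinity: "g \<in> \<Gamma> \<Longrightarrow> g$2$1 = 0 \<Longrightarrow> \<exists>k. g = transl k \<or> g = - transl k"

lemma cusp_group_if_fuchsian:
  assumes "fuchsian_finite_area_surface_group \<Gamma>" and "cusp_at_infinity \<Gamma>"
  shows "cusp_group \<Gamma>"
proof
  note F = assms(1)[unfolded fuchsian_finite_area_surface_group_def]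
  show "det g = 1" "g ** h \<in> \<Gamma>" if "g \<in> \<Gamma>" "h \<in> \<Gamma>" for g h using F that by blast+
  show "mat 1 \<in> \<Gamma>" "finite (\<Gamma> \<inter> cball 0 R)" for R using F by blast+
  show "adj g \<in> \<Gamma>" if g: "g \<in> \<Gamma>" for g
  proof -
    obtain h where h: "h \<in> \<Gamma>" "g ** h = mat 1" using F g by blast
    have "adj g = adj g ** (g ** h)" using h by simp
    also have "\<dots> = (adj g ** g) ** h" by (simp add: matrix_mul_assoc)
    finally have "adj g = (adj g ** g) ** h" .
    then show ?thesis using mult_adj_left[of g] F g h by auto
  qed
  show "transl 1 \<in> \<Gamma>" "\<And>g. g \<in> \<Gamma> \<Longrightarrow> g$2$1 = 0 \<Longrightarrow> \<exists>k. g = transl k \<or> g = - transl k"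
    using assms(2) unfolding cusp_at_infinity_def by blast+
qed

context cusp_group
begin

lemma cusp_phase_eq_imp_translates:
  assumes g: "g \<in> \<Gamma>" "g$2$1 \<noteq> 0" and g': "g' \<in> \<Gamma>" "g'$2$1 \<noteq> 0"
    and "cusp_phase g = cusp_phase g'" and "sgn (g$2$1) = sgn (g'$2$1)"
  obtains j k where "g = transl j ** g' ** transl k"
proof -
  obtain j h where h: "h \<in> \<Gamma>" "g = transl j ** g' ** h"
      and "h$2$1 = - (g$2$1 * g'$2$1) * (cusp_phase g - cusp_phase g')"
    by (rule cusp_phase_difference[OF transl_1_in g g'])
  then have "h$2$1 = 0" using assms(5) by simp
  obtain k where "h = transl k \<or> h = - transl k" using stabiliser_infinity[OF h(1) \<open>h$2$1 = 0\<close>] by blast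
  moreover have "h \<noteq> - transl k"
  proof
    assume "h = - transl k"
    then have "g$2$1 = - g'$2$1" using h(2) by simp
    then show False using assms(6) g(2) by (simp add: sgn_if split: if_splits)
  qed
  ultimately show ?thesis using that h(2) by blast
qed

end

section \<open>Geometry of an excursion\<close>

lemma tr2_le_exp_transl_length:
  assumes "2 < tr2 g" and "transl_length g \<le> T"
  shows "tr2 g \<le> 2 * exp (T / 2)"
proof -
  define t where "t = tr2 g / 2"
  have "1 \<le> t" "arcosh t \<le> T / 2" using assms by (simp_all add: t_def transl_length_def)
  moreover have "0 \<le> arcosh t" using \<open>1 \<le> t\<close> by simp
  ultimately have T: "0 \<le> T / 2" by linarith
  have "cosh (arcosh t) \<le> cosh (T / 2)"
    using \<open>0 \<le> arcosh t\<close> \<open>arcosh t \<le> T / 2\<close> T by (subst cosh_real_nonneg_le_iff) auto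
  also have "\<dots> \<le> exp (T / 2)" using cosh_plus_sinh[of "T / 2"] sinh_real_nonneg_iff[of "T / 2"] T by linarith
  finally show ?thesis using \<open>1 \<le> t\<close> by (simp add: t_def)
qed

text \<open>The chord of the axis at height \<open>1\<close> has half-width \<open>\<surd>(r\<^sup>2 - 1)\<close>, where
  \<open>r\<^sup>2 = (tr\<^sup>2 - 4)/(4c\<^sup>2)\<close> is the squared radius of the axis.\<close>

lemma tr2_sq_chord_width:
  fixes g :: mat2
  assumes t: "2 < tr2 g" and c: "g$2$1 \<noteq> 0"
    and z: "z1 \<in> excursion_endpoints g" "z2 \<in> excursion_endpoints g" "z1 \<noteq> z2"
  shows "(tr2 g)\<^sup>2 = (g$2$1)\<^sup>2 * ((Re z1 - Re z2)\<^sup>2 + 4) + 4"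
proof -
  let ?c = "g$2$1" and ?t = "tr2 g" and ?x = "axis_centre g" and ?r = "axis_radius g"
  have "0 \<le> ?t\<^sup>2 - 4" using mult_mono[of 2 ?t 2 ?t] t by (simp add: power2_eq_square)
  then have r2: "4 * ?c\<^sup>2 * ?r\<^sup>2 = ?t\<^sup>2 - 4"
    using c by (simp add: axis_radius_def power_divide power_mult_distrib)
  have on_chord: "(Re z - ?x)\<^sup>2 + 1 = ?r\<^sup>2" "Im z = 1" if "z \<in> excursion_endpoints g" for z
  proof -
    have "cmod (z - of_real ?x) = ?r" "Im z = 1"
      using that by (simp_all add: excursion_endpoints_def axis_def)
    then show "(Re z - ?x)\<^sup>2 + 1 = ?r\<^sup>2" "Im z = 1" using cmod_power2[of "z - of_real ?x"] by simp_all
  qed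
  have "Re z1 \<noteq> Re z2" using z on_chord(2) complex_eqI by metis
  moreover have "(Re z2 - ?x)\<^sup>2 = (Re z1 - ?x)\<^sup>2" using on_chord(1)[OF z(1)] on_chord(1)[OF z(2)] by simp
  ultimately have "Re z2 - ?x = - (Re z1 - ?x)" by (auto simp: power2_eq_iff)
  then have d: "Re z1 - Re z2 = 2 * (Re z1 - ?x)" by simp
  have "(Re z1 - Re z2)\<^sup>2 = 4 * (Re z1 - ?x)\<^sup>2" unfolding d by (simp add: power2_eq_square algebra_simps)
  then have "(Re z1 - Re z2)\<^sup>2 = 4 * (?r\<^sup>2 - 1)" using on_chord(1)[OF z(1)] by simp
  then show ?thesis using r2 by (simp add: algebra_simps)
qed

lemma n_excursion_lift_trace_bounds:
  fixes g :: mat2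
  assumes "n_excursion_lift n g" and t: "2 < tr2 g" and c: "1 \<le> \<bar>g$2$1\<bar>"
  shows "real n * \<bar>g$2$1\<bar> \<le> tr2 g" "tr2 g \<le> (real n + 4) * \<bar>g$2$1\<bar>"
proof -
  let ?c = "g$2$1" and ?t = "tr2 g"
  obtain z1 z2 where z: "excursion_endpoints g = {z1, z2}" "z1 \<noteq> z2"
      and W: "real n \<le> \<bar>Re z1 - Re z2\<bar>" "\<bar>Re z1 - Re z2\<bar> < real n + 1"
    using assms(1) unfolding n_excursion_lift_def by blast
  have tt: "?t\<^sup>2 = ?c\<^sup>2 * ((Re z1 - Re z2)\<^sup>2 + 4) + 4"
    using tr2_sq_chord_width[OF t _ _ _ z(2)] c z(1) by auto
  have c2: "1 \<le> ?c\<^sup>2" using power_mono[OF c, of 2] by simp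
  have "(real n * \<bar>?c\<bar>)\<^sup>2 = ?c\<^sup>2 * (real n)\<^sup>2" by (simp add: power_mult_distrib)
  also have "\<dots> \<le> ?c\<^sup>2 * ((Re z1 - Re z2)\<^sup>2 + 4)"
    using power_mono[OF W(1), of 2] by (intro mult_left_mono) auto
  also have "\<dots> \<le> ?t\<^sup>2" using tt by simp
  finally show "real n * \<bar>?c\<bar> \<le> ?t" by (rule power2_le_imp_le) (use t in simp)
  have "(Re z1 - Re z2)\<^sup>2 \<le> (real n + 1)\<^sup>2" using power_mono[OF less_imp_le[OF W(2)], of 2] by simp
  then have "?c\<^sup>2 * ((Re z1 - Re z2)\<^sup>2 + 4) \<le> ?c\<^sup>2 * ((real n + 1)\<^sup>2 + 4)"
    by (intro mult_left_mono) auto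
  then have "?t\<^sup>2 \<le> ?c\<^sup>2 * ((real n + 1)\<^sup>2 + 4) + 4 * ?c\<^sup>2" using tt c2 by linarith
  also have "\<dots> = ?c\<^sup>2 * ((real n + 1)\<^sup>2 + 8)" by (simp add: algebra_simps)
  also have "\<dots> \<le> ?c\<^sup>2 * (real n + 4)\<^sup>2"
    by (intro mult_left_mono) (simp_all add: power2_eq_square algebra_simps)
  also have "\<dots> = ((real n + 4) * \<bar>?c\<bar>)\<^sup>2" by (simp add: power_mult_distrib)
  finally show "?t \<le> (real n + 4) * \<bar>?c\<bar>" by (rule power2_le_imp_le) simp
qed

lemma card_le_mult_card_image:
  assumes "finite S" and "\<And>y. y \<in> f ` S \<Longrightarrow> card {x \<in> S. f x = y} \<le> m"
  shows "card S \<le> m * card (f ` S)"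
proof -
  have "card S = card (\<Union>y\<in>f ` S. {x \<in> S. f x = y})" by (rule arg_cong[of _ _ card]) auto
  also have "\<dots> \<le> (\<Sum>y\<in>f ` S. card {x \<in> S. f x = y})" using assms(1) by (intro card_UN_le) simp
  also have "\<dots> \<le> (\<Sum>y\<in>f ` S. m)" using assms(2) by (rule sum_mono)
  finally show ?thesis by (simp add: mult.commute)
qed

lemma card_separated_le:
  fixes P :: "real set" and \<delta> :: real
  assumes "finite P" and sub: "P \<subseteq> {0..<1}" and \<delta>: "0 < \<delta>" "\<delta> \<le> 1"
    and sep: "\<And>p q. p \<in> P \<Longrightarrow> q \<in> P \<Longrightarrow> p \<noteq> q \<Longrightarrow> \<delta> \<le> \<bar>p - q\<bar>"
  shows "real (card P) \<le> 2 / \<delta>"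
proof -
  define f where "f p = nat \<lfloor>p / \<delta>\<rfloor>" for p
  have inj: "inj_on f P"
  proof (rule inj_onI)
    fix p q assume pq: "p \<in> P" "q \<in> P" "f p = f q"
    have "0 \<le> p / \<delta>" "0 \<le> q / \<delta>" using pq sub \<delta> by auto
    then have "\<lfloor>p / \<delta>\<rfloor> = \<lfloor>q / \<delta>\<rfloor>" using pq(3) unfolding f_def by (metis nat_eq_iff2 zero_le_floor)
    then have "\<bar>p / \<delta> - q / \<delta>\<bar> < 1" by linarith
    then have "\<bar>p - q\<bar> < \<delta>" using \<delta> by (simp add: diff_divide_distrib[symmetric] abs_divide)
    then show "p = q" using sep pq by force
  qed
  have img: "f ` P \<subseteq> {..< nat \<lceil>1 / \<delta>\<rceil>}"
  proof
    fix y assume "y \<in> f ` P"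
    then obtain p where p: "p \<in> P" "y = f p" by blast
    have "p / \<delta> < 1 / \<delta>" using p sub \<delta> by (auto simp: divide_strict_right_mono)
    then have "\<lfloor>p / \<delta>\<rfloor> < \<lceil>1 / \<delta>\<rceil>" by linarith
    then show "y \<in> {..< nat \<lceil>1 / \<delta>\<rceil>}" using p sub \<delta> by (auto simp: f_def)
  qed
  have "card P = card (f ` P)" using card_image[OF inj] by simp
  also have "\<dots> \<le> nat \<lceil>1 / \<delta>\<rceil>" using card_mono[OF _ img] by simp
  finally have "real (card P) \<le> real (nat \<lceil>1 / \<delta>\<rceil>)" by simp
  also have "\<dots> \<le> 1 / \<delta> + 1" using \<delta> by (simp add: of_nat_nat)
  also have "\<dots> \<le> 2 / \<delta>" using \<delta> by (simp add: field_simps)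
  finally show ?thesis .
qed

section \<open>Counting lifts of excursions\<close>

context cusp_group
begin

lemma excursion_liftsD:
  assumes "g \<in> excursion_lifts \<Gamma> n T"
  shows "g \<in> \<Gamma>" "g$2$1 \<noteq> 0" "2 < tr2 g" "0 \<le> axis_centre g" "axis_centre g < 1"
  using assms unfolding excursion_lifts_def n_excursion_lift_def by auto

lemma excursion_lift_bounds:
  assumes g: "g \<in> excursion_lifts \<Gamma> n T"
  shows "1 \<le> \<bar>g$2$1\<bar>" "tr2 g \<le> 2 * exp (T / 2)"
    "real n * \<bar>g$2$1\<bar> \<le> tr2 g" "tr2 g \<le> (real n + 4) * \<bar>g$2$1\<bar>"
proof -
  note D = excursion_liftsD[OF g]
  show c: "1 \<le> \<bar>g$2$1\<bar>" using shimizu[OF transl_1_in D(1,2)] .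
  show "tr2 g \<le> 2 * exp (T / 2)"
    using g tr2_le_exp_transl_length by (simp add: excursion_lifts_def)
  show "real n * \<bar>g$2$1\<bar> \<le> tr2 g" "tr2 g \<le> (real n + 4) * \<bar>g$2$1\<bar>"
    using n_excursion_lift_trace_bounds[OF _ D(3) c] g by (simp_all add: excursion_lifts_def)
qed

lemma excursion_lift_lower_left_le:
  assumes "g \<in> excursion_lifts \<Gamma> n T"
  shows "real n * \<bar>g$2$1\<bar> \<le> 2 * exp (T / 2)"
  using excursion_lift_bounds[OF assms] by linarith

lemma norm_excursion_lift_le:
  assumes g: "g \<in> excursion_lifts \<Gamma> n T" and n: "1 \<le> n"
  defines "E \<equiv> exp (T / 2)"
  shows "norm g \<le> 8 * E + 9 * E\<^sup>2 + 1"
proof -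
  note D = excursion_liftsD[OF g] and B = excursion_lift_bounds[OF g]
  let ?a = "g$1$1" and ?b = "g$1$2" and ?c = "g$2$1" and ?d = "g$2$2"
  have "\<bar>?c\<bar> \<le> real n * \<bar>?c\<bar>" using n by (simp add: mult_le_cancel_right1)
  then have c: "\<bar>?c\<bar> \<le> 2 * E" using excursion_lift_lower_left_le[OF g] unfolding E_def by linarith
  have "?a - ?d = 2 * ?c * axis_centre g" using D(2) by (simp add: axis_centre_def)
  then have "\<bar>?a - ?d\<bar> = 2 * \<bar>?c\<bar> * axis_centre g" using D(4) by (simp add: abs_mult)
  also have "\<dots> \<le> 2 * \<bar>?c\<bar>" using D(5) mult_left_le[of "axis_centre g" "2 * \<bar>?c\<bar>"] by simp
  finally have "\<bar>?a - ?d\<bar> \<le> 4 * E" using c by linarith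
  moreover have "\<bar>?a + ?d\<bar> \<le> 2 * E" using D(3) B(2) unfolding E_def tr2_def by simp
  ultimately have a: "\<bar>?a\<bar> \<le> 3 * E" and d: "\<bar>?d\<bar> \<le> 3 * E" by linarith+
  have "\<bar>?b\<bar> \<le> \<bar>?b\<bar> * \<bar>?c\<bar>" using B(1) by (simp add: mult_le_cancel_left1)
  also have "\<dots> = \<bar>?a * ?d - 1\<bar>"
    using det_eq_1[OF D(1)] by (simp add: det_mat2 abs_mult[symmetric] algebra_simps)
  also have "\<dots> \<le> \<bar>?a\<bar> * \<bar>?d\<bar> + 1" by (simp add: abs_mult[symmetric] abs_triangle_ineq4)
  also have "\<bar>?a\<bar> * \<bar>?d\<bar> \<le> (3 * E) * (3 * E)" using a d by (intro mult_mono) auto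
  finally have b: "\<bar>?b\<bar> \<le> 9 * E\<^sup>2 + 1" by (simp add: power2_eq_square)
  show ?thesis using norm_mat2_le[of g] a b c d by linarith
qed

lemma finite_excursion_lifts:
  assumes "1 \<le> n"
  shows "finite (excursion_lifts \<Gamma> n T)"
proof -
  have "excursion_lifts \<Gamma> n T \<subseteq> \<Gamma> \<inter> cball 0 (8 * exp (T / 2) + 9 * (exp (T / 2))\<^sup>2 + 1)"
    using norm_excursion_lift_le[OF _ assms] excursion_liftsD(1) by (auto simp: dist_norm)
  then show ?thesis using finite_inter_cball finite_subset by blast
qed

lemma excursion_lifts_cusp_phase_separated:
  assumes g: "g \<in> excursion_lifts \<Gamma> n T" and g': "g' \<in> excursion_lifts \<Gamma> n T" and n: "1 \<le> n"
    and "cusp_phase g \<noteq> cusp_phase g'"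
  shows "(real n)\<^sup>2 / (4 * exp T) \<le> \<bar>cusp_phase g - cusp_phase g'\<bar>"
proof -
  note D = excursion_liftsD[OF g] and D' = excursion_liftsD[OF g']
  define X where "X = 2 * exp (T / 2) / real n"
  have "\<bar>k$2$1\<bar> \<le> X" if "k \<in> excursion_lifts \<Gamma> n T" for k
    using excursion_lift_lower_left_le[OF that] n by (simp add: X_def field_simps)
  moreover have "0 < X" using n by (simp add: X_def)
  ultimately have "\<bar>g$2$1 * g'$2$1\<bar> \<le> X\<^sup>2"
    unfolding abs_mult power2_eq_square using g g' by (intro mult_mono) auto
  moreover have "1 \<le> \<bar>g$2$1 * g'$2$1\<bar> * \<bar>cusp_phase g - cusp_phase g'\<bar>"
    using cusp_phase_separated[OF transl_1_in D(1,2) D'(1,2) assms(4)] .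
  ultimately have "1 \<le> X\<^sup>2 * \<bar>cusp_phase g - cusp_phase g'\<bar>"
    by (meson abs_ge_zero mult_right_mono order_trans)
  moreover have "X\<^sup>2 = 4 * exp T / (real n)\<^sup>2"
    by (simp add: X_def power_divide power_mult_distrib power2_eq_square exp_add[symmetric])
  ultimately show ?thesis using n by (simp add: field_simps)
qed

text \<open>Both lifts have the same \<open>c\<close>; the axis centres then differ by \<open>(j - k)/2\<close> and the traces by
  \<open>(j + k) c\<close>, while the normalisations confine these differences to \<open>(-1, 1)\<close> and \<open>[-4c, 4c]\<close>.\<close>

lemma excursion_lift_translate_bounds:
  assumes g: "g \<in> excursion_lifts \<Gamma> n T" and g': "g' \<in> excursion_lifts \<Gamma> n T"
    and gg': "g = transl j ** g' ** transl k"
  shows "j \<in> {-2..2}" "k \<in> {-2..2}"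
proof -
  note D = excursion_liftsD[OF g] and D' = excursion_liftsD[OF g']
  note B = excursion_lift_bounds[OF g] and B' = excursion_lift_bounds[OF g']
  let ?c = "g'$2$1"
  have e: "g$1$1 = g'$1$1 + of_int j * ?c" "g$2$1 = ?c" "g$2$2 = g'$2$2 + of_int k * ?c"
    using gg' by (simp_all add: algebra_simps)
  have "axis_centre g - axis_centre g' = of_int (j - k) / 2"
    using D'(2) unfolding axis_centre_def e by (simp add: field_simps)
  then have "- 2 < real_of_int (j - k)" and "real_of_int (j - k) < 2"
    using D(4,5) D'(4,5) by (simp_all add: field_simps)
  then have jk: "- 2 < j - k" "j - k < 2" by linarith+
  have "tr2 g - tr2 g' = of_int (j + k) * ?c" unfolding tr2_def e by (simp add: algebra_simps)
  moreover have "\<bar>tr2 g - tr2 g'\<bar> \<le> 4 * \<bar>?c\<bar>"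
  proof -
    have "tr2 g \<le> real n * \<bar>?c\<bar> + 4 * \<bar>?c\<bar>" "tr2 g' \<le> real n * \<bar>?c\<bar> + 4 * \<bar>?c\<bar>"
      using B(4) B'(4) e(2) by (simp_all add: distrib_right)
    moreover have "real n * \<bar>?c\<bar> \<le> tr2 g" "real n * \<bar>?c\<bar> \<le> tr2 g'" using B(3) B'(3) e(2) by simp_all
    ultimately show ?thesis by (simp add: abs_le_iff)
  qed
  ultimately have "\<bar>real_of_int (j + k)\<bar> * \<bar>?c\<bar> \<le> 4 * \<bar>?c\<bar>" by (simp add: abs_mult)
  then have "real_of_int \<bar>j + k\<bar> \<le> 4" using D'(2) by simp
  then have "\<bar>j + k\<bar> \<le> 4" by linarith
  with jk show "j \<in> {-2..2}" "k \<in> {-2..2}" unfolding abs_le_iff atLeastAtMost_iff by presburger+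
qed

lemma card_same_cusp_phase_le:
  assumes g': "g' \<in> excursion_lifts \<Gamma> n T"
  shows "card {g \<in> excursion_lifts \<Gamma> n T.
    sgn (g$2$1) = sgn (g'$2$1) \<and> cusp_phase g = cusp_phase g'} \<le> 25"
    (is "card ?F \<le> _")
proof -
  let ?\<tau> = "\<lambda>(j, k). transl j ** g' ** transl k"
  have "?F \<subseteq> ?\<tau> ` ({-2..2} \<times> {-2..2})"
  proof
    fix g assume "g \<in> ?F"
    then have g: "g \<in> excursion_lifts \<Gamma> n T"
      and "sgn (g$2$1) = sgn (g'$2$1)" "cusp_phase g = cusp_phase g'" by simp_all
    then obtain j k where gg': "g = transl j ** g' ** transl k"
      using cusp_phase_eq_imp_translates[OF excursion_liftsD(1,2)[OF g] excursion_liftsD(1,2)[OF g']]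
      by metis
    then show "g \<in> ?\<tau> ` ({-2..2} \<times> {-2..2})"
      using excursion_lift_translate_bounds[OF g g' gg'] by force
  qed
  then have "card ?F \<le> card (?\<tau> ` ({-2..2} \<times> {-2..2}))" by (rule card_mono[rotated]) simp
  also have "\<dots> \<le> card ({-2..2::int} \<times> {-2..2::int})" by (rule card_image_le) simp
  finally show ?thesis by (simp add: card_cartesian_product)
qed

lemma card_cusp_phase_excursion_lifts_le:
  assumes n: "1 \<le> n"
  shows "real (card (cusp_phase ` excursion_lifts \<Gamma> n T)) \<le> 8 * exp T / (real n)\<^sup>2"
proof (cases "excursion_lifts \<Gamma> n T = {}")
  case False
  then obtain g where g: "g \<in> excursion_lifts \<Gamma> n T" by blast
  define \<delta> where "\<delta> = (real n)\<^sup>2 / (4 * exp T)"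
  have "real n \<le> real n * \<bar>g$2$1\<bar>"
    using excursion_lift_bounds(1)[OF g] by (simp add: mult_le_cancel_left1)
  then have "real n \<le> 2 * exp (T / 2)" using excursion_lift_lower_left_le[OF g] by linarith
  then have "(real n)\<^sup>2 \<le> (2 * exp (T / 2))\<^sup>2" by (intro power_mono) auto
  then have "\<delta> \<le> 1" by (simp add: \<delta>_def power_mult_distrib power2_eq_square exp_add[symmetric])
  have "real (card (cusp_phase ` excursion_lifts \<Gamma> n T)) \<le> 2 / \<delta>"
  proof (rule card_separated_le)
    show "finite (cusp_phase ` excursion_lifts \<Gamma> n T)" using finite_excursion_lifts[OF n] by simp
    show "cusp_phase ` excursion_lifts \<Gamma> n T \<subseteq> {0..<1}" by (auto simp: cusp_phase_def frac_lt_1)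
    show "0 < \<delta>" using n by (simp add: \<delta>_def)
    show "\<delta> \<le> 1" by fact
    show "\<delta> \<le> \<bar>p - q\<bar>"
      if pq: "p \<in> cusp_phase ` excursion_lifts \<Gamma> n T" "q \<in> cusp_phase ` excursion_lifts \<Gamma> n T" "p \<noteq> q"
      for p q
    proof -
      obtain g1 g2 where "g1 \<in> excursion_lifts \<Gamma> n T" "g2 \<in> excursion_lifts \<Gamma> n T"
          "p = cusp_phase g1" "q = cusp_phase g2"
        using pq(1,2) by blast
      then show ?thesis
        using excursion_lifts_cusp_phase_separated[of g1 n T g2] n pq(3) by (simp add: \<delta>_def)
    qed
  qed
  also have "\<dots> = 8 * exp T / (real n)\<^sup>2" using n by (simp add: \<delta>_def)
  finally show ?thesis .
qed simp

text \<open>Lifts are keyed by the sign of \<open>c\<close> too: for lifts with equal cusp phase and opposite signs,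
  \<open>g = - (z \<mapsto> z + j) g' (z \<mapsto> z + k)\<close> with \<open>\<bar>j + k\<bar> \<ge> 2n\<close>, so there is no uniform bound on them.\<close>

lemma card_excursion_lifts_le:
  assumes n: "1 \<le> n"
  shows "real (A_count \<Gamma> n T) \<le> 400 * exp T / (real n)\<^sup>2"
proof -
  define S where "S = excursion_lifts \<Gamma> n T"
  define key where "key g = (sgn (g$2$1), cusp_phase g)" for g
  have "card S \<le> 25 * card (key ` S)"
  proof (rule card_le_mult_card_image)
    show "finite S" using finite_excursion_lifts[OF n] by (simp add: S_def)
    show "card {g \<in> S. key g = y} \<le> 25" if "y \<in> key ` S" for y
      using that card_same_cusp_phase_le by (auto simp: S_def key_def)
  qed
  moreover have "key ` S \<subseteq> {-1, 1} \<times> cusp_phase ` S"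
  proof
    fix y assume "y \<in> key ` S"
    then obtain g where g: "g \<in> S" "y = key g" by blast
    then have "sgn (g$2$1) \<in> {-1, 1}" using excursion_liftsD(2)[of g n T] by (simp add: S_def sgn_if)
    then show "y \<in> {-1, 1} \<times> cusp_phase ` S" using g by (simp add: key_def)
  qed
  then have "card (key ` S) \<le> card ({-1, 1::real} \<times> cusp_phase ` S)"
    by (rule card_mono[rotated]) (simp add: S_def finite_excursion_lifts[OF n])
  then have "card (key ` S) \<le> 2 * card (cusp_phase ` S)" by (simp add: card_cartesian_product)
  moreover have "real (card (cusp_phase ` S)) \<le> 8 * exp T / (real n)\<^sup>2"
    using card_cusp_phase_excursion_lifts_le[OF n] by (simp add: S_def)
  ultimately have "real (card S) \<le> 50 * (8 * exp T / (real n)\<^sup>2)" by linarith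
  then show ?thesis by (simp add: A_count_def S_def)
qed

end

theorem proposition4p5:
  fixes \<Gamma> :: "mat2 set"
  assumes "fuchsian_finite_area_surface_group \<Gamma>"
    and "cusp_at_infinity \<Gamma>"
  shows "\<exists>C>0. \<forall>n::nat. \<forall>T::real. n \<ge> 1 \<longrightarrow> T > 0 \<longrightarrow>
           finite (excursion_lifts \<Gamma> n T) \<and>
           real (A_count \<Gamma> n T) \<le> C * exp T / (real n)^2"
proof -
  interpret cusp_group \<Gamma> using cusp_group_if_fuchsian[OF assms] .
  show ?thesis
    by (intro exI[of _ 400]) (simp add: finite_excursion_lifts card_excursion_lifts_le)
qed

end
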